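(* Let $G$ be a cubic graph. Suppose that for every vertex $x$ of $G$ there is a subgraph $H$ of $G$, all of whose vertices are far from $x$, with the following properties: (1) $H$ consists of two vertices $v,w$ together with three internally vertex-disjoint paths from $v$ to $w$; (2) each of these three paths has an even number of edges; (3) no two vertices of $H$ are joined by a short path in $G$ that uses no edge of $H$ (in particular $H$ is an induced subgraph); (4) each of the three paths is long. Then in the coloring game on $G$ with $3$ colors (A moving first), B has a winning strategy; consequently $\chi_g(G)=4$.
   Context: Coloring game: two players A and B alternately (A moves first) choose an uncolored vertex and assign it a color from $\{1,\dots,k\}$ keeping the partial coloring proper; A wins if all vertices get colored, B wins if some uncolored vertex has all $k$ colors among its neighbors; $\chi_g(G)$ is the least $k$ for which A has a winning strategy. Two vertices are close if they are joined by a path of length at most two (equivalently, their distance is at most 2); otherwise they are far apart. A path is short if some vertex on it is close to both of its endpoints; otherwise it is long. *)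

theory Defs
  imports Main
begin

definition simple_graph :: "'a set \<Rightarrow> ('a \<Rightarrow> 'a \<Rightarrow> bool) \<Rightarrow> bool" where
  "simple_graph V E \<longleftrightarrow> finite V \<and> (\<forall>u v. E u v \<longrightarrow> u \<in> V \<and> v \<in> V)
     \<and> (\<forall>u v. E u v \<longrightarrow> E v u) \<and> (\<forall>u. \<not> E u u)"

definition cubic :: "'a set \<Rightarrow> ('a \<Rightarrow> 'a \<Rightarrow> bool) \<Rightarrow> bool" where
  "cubic V E \<longleftrightarrow> (\<forall>v\<in>V. card {u. E v u} = 3)"

text \<open>A path is a nonempty list of distinct vertices, consecutive ones adjacent.
  Its length (number of edges) is length minus one.\<close>
definition gpath :: "'a set \<Rightarrow> ('a \<Rightarrow> 'a \<Rightarrow> bool) \<Rightarrow> 'a list \<Rightarrow> bool" where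
  "gpath V E P \<longleftrightarrow> P \<noteq> [] \<and> distinct P \<and> set P \<subseteq> V
     \<and> (\<forall>i. Suc i < length P \<longrightarrow> E (P ! i) (P ! Suc i))"

definition path_edges :: "'a list \<Rightarrow> 'a set set" where
  "path_edges P = {{P ! i, P ! Suc i} | i. Suc i < length P}"

definition close :: "('a \<Rightarrow> 'a \<Rightarrow> bool) \<Rightarrow> 'a \<Rightarrow> 'a \<Rightarrow> bool" where
  "close E u v \<longleftrightarrow> u = v \<or> E u v \<or> (\<exists>z. E u z \<and> E z v)"

definition far :: "('a \<Rightarrow> 'a \<Rightarrow> bool) \<Rightarrow> 'a \<Rightarrow> 'a \<Rightarrow> bool" where
  "far E u v \<longleftrightarrow> \<not> close E u v"

definition short_path :: "('a \<Rightarrow> 'a \<Rightarrow> bool) \<Rightarrow> 'a list \<Rightarrow> bool" where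
  "short_path E P \<longleftrightarrow> (\<exists>z\<in>set P. close E (hd P) z \<and> close E (last P) z)"

definition long_path :: "('a \<Rightarrow> 'a \<Rightarrow> bool) \<Rightarrow> 'a list \<Rightarrow> bool" where
  "long_path E P \<longleftrightarrow> \<not> short_path E P"

definition good_theta ::
  "'a set \<Rightarrow> ('a \<Rightarrow> 'a \<Rightarrow> bool) \<Rightarrow> 'a \<Rightarrow> 'a \<Rightarrow> 'a list \<Rightarrow> 'a list \<Rightarrow> 'a list \<Rightarrow> bool" where
  "good_theta V E v w P1 P2 P3 \<longleftrightarrow>
     (let Ps = [P1, P2, P3];
          VH = set P1 \<union> set P2 \<union> set P3;
          EH = path_edges P1 \<union> path_edges P2 \<union> path_edges P3 in
     \<comment> \<open>(1) two vertices and three internally vertex-disjoint v-w paths\<close>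
     v \<noteq> w
     \<and> (\<forall>P\<in>set Ps. gpath V E P \<and> hd P = v \<and> last P = w)
     \<and> set P1 \<inter> set P2 = {v, w} \<and> set P1 \<inter> set P3 = {v, w} \<and> set P2 \<inter> set P3 = {v, w}
     \<comment> \<open>(2) each path has an even number of edges\<close>
     \<and> (\<forall>P\<in>set Ps. even (length P - 1))
     \<comment> \<open>(3) no two vertices of H are joined by a short path avoiding the edges of H\<close>
     \<and> (\<forall>Q. gpath V E Q \<and> hd Q \<in> VH \<and> last Q \<in> VH \<and> hd Q \<noteq> last Q
            \<and> path_edges Q \<inter> EH = {} \<longrightarrow> \<not> short_path E Q)
     \<comment> \<open>(4) each of the three paths is long\<close>
     \<and> (\<forall>P\<in>set Ps. long_path E P))"

text \<open>Positions are partial colorings c :: 'a \<Rightarrow> nat option (None = uncolored);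
  colors are 1..k.\<close>
definition legal_move ::
  "'a set \<Rightarrow> ('a \<Rightarrow> 'a \<Rightarrow> bool) \<Rightarrow> nat \<Rightarrow> ('a \<Rightarrow> nat option) \<Rightarrow> ('a \<Rightarrow> nat option) \<Rightarrow> bool" where
  "legal_move V E k c c' \<longleftrightarrow> (\<exists>v i. v \<in> V \<and> c v = None \<and> i \<in> {1..k}
      \<and> (\<forall>u. E v u \<longrightarrow> c u \<noteq> Some i) \<and> c' = c(v := Some i))"

definition all_colored :: "'a set \<Rightarrow> ('a \<Rightarrow> nat option) \<Rightarrow> bool" where
  "all_colored V c \<longleftrightarrow> (\<forall>v\<in>V. c v \<noteq> None)"

definition blocked :: "'a set \<Rightarrow> ('a \<Rightarrow> 'a \<Rightarrow> bool) \<Rightarrow> nat \<Rightarrow> ('a \<Rightarrow> nat option) \<Rightarrow> bool" where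
  "blocked V E k c \<longleftrightarrow> (\<exists>v\<in>V. c v = None \<and> (\<forall>i\<in>{1..k}. \<exists>u. E v u \<and> c u = Some i))"

text \<open>A_wins_A / A_wins_B: A has a winning strategy from position c with A / B to move.\<close>
inductive A_wins_A and A_wins_B ::
  "'a set \<Rightarrow> ('a \<Rightarrow> 'a \<Rightarrow> bool) \<Rightarrow> nat \<Rightarrow> ('a \<Rightarrow> nat option) \<Rightarrow> bool"
  for V E k where
  AA_done: "all_colored V c \<Longrightarrow> A_wins_A V E k c"
| AB_done: "all_colored V c \<Longrightarrow> A_wins_B V E k c"
| AA_move: "\<not> blocked V E k c \<Longrightarrow> legal_move V E k c c' \<Longrightarrow> A_wins_B V E k c' \<Longrightarrow> A_wins_A V E k c"
| AB_move: "\<not> blocked V E k c \<Longrightarrow> (\<And>c'. legal_move V E k c c' \<Longrightarrow> A_wins_A V E k c')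
            \<Longrightarrow> A_wins_B V E k c"

text \<open>B_wins_A / B_wins_B: B has a winning strategy from position c with A / B to move.\<close>
inductive B_wins_A and B_wins_B ::
  "'a set \<Rightarrow> ('a \<Rightarrow> 'a \<Rightarrow> bool) \<Rightarrow> nat \<Rightarrow> ('a \<Rightarrow> nat option) \<Rightarrow> bool"
  for V E k where
  BA_done: "blocked V E k c \<Longrightarrow> B_wins_A V E k c"
| BB_done: "blocked V E k c \<Longrightarrow> B_wins_B V E k c"
| BA_move: "\<not> all_colored V c \<Longrightarrow> (\<And>c'. legal_move V E k c c' \<Longrightarrow> B_wins_B V E k c')
            \<Longrightarrow> B_wins_A V E k c"
| BB_move: "legal_move V E k c c' \<Longrightarrow> B_wins_A V E k c' \<Longrightarrow> B_wins_B V E k c"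

definition game_chromatic_number :: "'a set \<Rightarrow> ('a \<Rightarrow> 'a \<Rightarrow> bool) \<Rightarrow> nat" where
  "game_chromatic_number V E = (LEAST k. A_wins_A V E k (\<lambda>_. None))"

end

theory Submission
  imports Defs
begin

(* Upper bound: in a graph of maximum degree below k no uncoloured vertex can ever see all k
   colours, so A wins with k colours; for cubic graphs this gives 4.

   Lower bound: with 0, 1 or 2 colours B wins on any graph of minimum degree 2.  With 3 colours,
   B answers A's first move x by choosing a good theta subgraph H (vertices v, w, paths P1, P2, P3)
   far from x and colouring v, then w (unless A already did).  A has made at most two further
   moves, and the "pendant zones" of interior vertices of different paths are pairwise disjoint,
   so one path P avoids both of A's moves with all its zones.  Such a path is a "trap path":
   an even path with coloured ends whose interior vertices have a single pendant neighbour
   outside the path, with untouched and pairwise disjoint zones.  On a trap path B wins by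
   colouring the second vertex with a third colour: either A answers outside the first zone and
   B blocks the first interior vertex, or A answers inside it and the rest of the path is a
   shorter trap path. *)

lemma blocked_not_all_colored: "blocked V E k c \<Longrightarrow> \<not> all_colored V c"
  by (auto simp: blocked_def all_colored_def)

lemma legal_move_not_all_colored: "legal_move V E k c c' \<Longrightarrow> \<not> all_colored V c"
  by (auto simp: legal_move_def all_colored_def)

lemma A_wins_not_B_wins:
  "A_wins_A V E k c \<Longrightarrow> \<not> B_wins_A V E k c"
  "A_wins_B V E k c \<Longrightarrow> \<not> B_wins_B V E k c"
proof (induction rule: A_wins_A_A_wins_B.inducts)
  case (AA_done c)
  then show ?case by (auto elim: B_wins_A.cases dest: blocked_not_all_colored)
next
  case (AB_done c)
  then show ?case by (auto elim: B_wins_B.cases dest: blocked_not_all_colored legal_move_not_all_colored)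
next
  case (AA_move c c')
  then show ?case by (auto elim: B_wins_A.cases)
next
  case (AB_move c)
  then show ?case by (auto elim: B_wins_B.cases)
qed

lemma game_chromatic_number_eqI:
  assumes "A_wins_A V E k (\<lambda>_. None)" and "\<And>j. j < k \<Longrightarrow> B_wins_A V E j (\<lambda>_. None)"
  shows "game_chromatic_number V E = k"
  unfolding game_chromatic_number_def
proof (rule Least_equality)
  fix j assume "A_wins_A V E j (\<lambda>_. None)"
  then show "k \<le> j" using assms(2) A_wins_not_B_wins(1) by (meson not_le)
qed (rule assms(1))

lemma legal_move_fewer_uncoloured:
  assumes "finite V" and "legal_move V E k c c'"
  shows "card {v\<in>V. c' v = None} < card {v\<in>V. c v = None}"
proof -
  obtain y i where y: "y \<in> V" "c y = None" "c' = c(y := Some i)"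
    using assms(2) unfolding legal_move_def by blast
  then have "{v\<in>V. c' v = None} = {v\<in>V. c v = None} - {y}" by auto
  moreover have "finite {v\<in>V. c v = None}" "y \<in> {v\<in>V. c v = None}" using y assms(1) by auto
  ultimately show ?thesis by (metis card_Diff1_less)
qed

section \<open>Upper bound: A wins once there are more colours than neighbours\<close>

lemma free_colour:
  assumes "finite N" and "card N < k"
  shows "\<exists>i\<in>{1..k}. \<forall>u\<in>N. c u \<noteq> Some i"
proof (rule ccontr)
  assume "\<not> ?thesis"
  then obtain f where f: "\<forall>i\<in>{1..k}. f i \<in> N \<and> c (f i) = Some i" by metis
  have "inj_on f {1..k}" unfolding inj_on_def using f by (metis option.inject)
  moreover have "f ` {1..k} \<subseteq> N" using f by auto
  ultimately have "card {1..k} \<le> card N" using assms(1) by (metis card_inj_on_le)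
  then show False using assms(2) by simp
qed

lemma never_blocked:
  assumes deg: "\<And>v. v \<in> V \<Longrightarrow> finite {u. E v u} \<and> card {u. E v u} < k"
  shows "\<not> blocked V E k c"
proof
  assume "blocked V E k c"
  then obtain v where v: "v \<in> V" "\<forall>i\<in>{1..k}. \<exists>u. E v u \<and> c u = Some i"
    unfolding blocked_def by blast
  obtain i where "i \<in> {1..k}" "\<forall>u\<in>{u. E v u}. c u \<noteq> Some i"
    using free_colour deg[OF v(1)] by blast
  then show False using v(2) by auto
qed

lemma A_wins_when_degree_small:
  assumes fin: "finite V" and deg: "\<And>v. v \<in> V \<Longrightarrow> finite {u. E v u} \<and> card {u. E v u} < k"
  shows "A_wins_A V E k c \<and> A_wins_B V E k c"
proof (induction "card {v\<in>V. c v = None}" arbitrary: c rule: less_induct)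
  case less
  have nb: "\<not> blocked V E k c" using never_blocked deg by blast
  have IH: "\<And>c'. legal_move V E k c c' \<Longrightarrow> A_wins_A V E k c' \<and> A_wins_B V E k c'"
    using less legal_move_fewer_uncoloured[OF fin] by blast
  show ?case
  proof (cases "all_colored V c")
    case True
    then show ?thesis by (auto intro: AA_done AB_done)
  next
    case False
    then obtain y where y: "y \<in> V" "c y = None" unfolding all_colored_def by blast
    obtain i where "i \<in> {1..k}" "\<forall>u\<in>{u. E y u}. c u \<noteq> Some i"
      using free_colour deg[OF y(1)] by blast
    then have "legal_move V E k c (c(y := Some i))" unfolding legal_move_def using y by blast
    then show ?thesis using AA_move[OF nb] AB_move[OF nb] IH by blast
  qed
qed

lemma simple_graph_sym: "simple_graph V E \<Longrightarrow> E u v \<Longrightarrow> E v u"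
  by (simp add: simple_graph_def)

lemma simple_graph_irrefl: "simple_graph V E \<Longrightarrow> \<not> E u u"
  by (simp add: simple_graph_def)

lemma simple_graph_vertices: "simple_graph V E \<Longrightarrow> E u v \<Longrightarrow> u \<in> V \<and> v \<in> V"
  by (simp add: simple_graph_def)

lemma cubic_neighbour_outside:
  assumes "cubic V E" and "v \<in> V" and "finite X" and "card X < 3"
  shows "\<exists>u. E v u \<and> u \<notin> X"
proof (rule ccontr)
  assume "\<not> ?thesis"
  then have "card {u. E v u} \<le> card X" using assms(3) card_mono by (metis mem_Collect_eq subsetI)
  then show False using assms by (simp add: cubic_def)
qed

lemma cubic_degree:
  assumes "cubic V E" and "v \<in> V"
  shows "finite {u. E v u}" "card {u. E v u} = 3"
proof -
  show c: "card {u. E v u} = 3" using assms by (simp add: cubic_def)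
  then show "finite {u. E v u}" by (metis card.infinite zero_neq_numeral)
qed

lemma cubic_two_neighbours:
  assumes "cubic V E" and "v \<in> V"
  shows "\<exists>u u'. E v u \<and> E v u' \<and> u \<noteq> u'"
proof -
  obtain u where "E v u" using cubic_neighbour_outside[OF assms, of "{}"] by auto
  moreover obtain u' where "E v u'" "u' \<notin> {u}" using cubic_neighbour_outside[OF assms, of "{u}"] by auto
  ultimately show ?thesis by blast
qed

section \<open>Few colours: B wins with at most two colours\<close>

lemma B_wins_no_colours: "V \<noteq> {} \<Longrightarrow> B_wins_A V E 0 (\<lambda>_. None)"
  by (intro BA_done) (auto simp: blocked_def)

text \<open>With one colour, a neighbour of A's first vertex is blocked at once.\<close>
lemma B_wins_one_colour:
  assumes sg: "simple_graph V E" and "V \<noteq> {}" and nbr: "\<And>x. x \<in> V \<Longrightarrow> \<exists>u. E x u"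
  shows "B_wins_A V E 1 (\<lambda>_. None)"
proof (rule BA_move)
  show "\<not> all_colored V (\<lambda>_. None)" using assms(2) by (auto simp: all_colored_def)
  fix c1 assume "legal_move V E 1 (\<lambda>_. None) c1"
  then obtain x i where x: "x \<in> V" "i \<in> {1..1::nat}" "c1 = (\<lambda>_. None)(x := Some i)"
    unfolding legal_move_def by blast
  obtain u where u: "E x u" using nbr[OF x(1)] by blast
  have "blocked V E 1 c1" unfolding blocked_def
    using x u simple_graph_irrefl[OF sg, of u] simple_graph_sym[OF sg u] simple_graph_vertices[OF sg u]
    by (intro bexI[of _ u]) auto
  then show "B_wins_B V E 1 c1" by (rule BB_done)
qed

text \<open>With two colours, B colours a second neighbour t of a neighbour u of A's vertex x
  with the other colour, blocking u.\<close>
lemma B_wins_two_colours: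
  assumes sg: "simple_graph V E" and "V \<noteq> {}"
    and nbrs: "\<And>x. x \<in> V \<Longrightarrow> \<exists>u u'. E x u \<and> E x u' \<and> u \<noteq> u'"
  shows "B_wins_A V E 2 (\<lambda>_. None)"
proof (rule BA_move)
  show "\<not> all_colored V (\<lambda>_. None)" using assms(2) by (auto simp: all_colored_def)
  fix c1 assume "legal_move V E 2 (\<lambda>_. None) c1"
  then obtain x i where x: "x \<in> V" "i \<in> {1..2::nat}" "c1 = (\<lambda>_. None)(x := Some i)"
    unfolding legal_move_def by blast
  obtain u where u: "E x u" using nbrs[OF x(1)] by blast
  have uV: "u \<in> V" using simple_graph_vertices[OF sg u] by auto
  obtain t where t: "E u t" "t \<noteq> x" using nbrs[OF uV] by blast
  have tV: "t \<in> V" using simple_graph_vertices[OF sg t(1)] by auto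
  have ux: "u \<noteq> x" "u \<noteq> t" using u t simple_graph_irrefl[OF sg] by auto
  define c2 where "c2 = c1(t := Some (3 - i))"
  have lm: "legal_move V E 2 c1 c2" unfolding legal_move_def c2_def
    using x t tV by (intro exI[of _ t] exI[of _ "3-i"]) (auto; presburger)
  have "blocked V E 2 c2" unfolding blocked_def
  proof (intro bexI[of _ u] conjI ballI)
    show "c2 u = None" using x ux by (simp add: c2_def)
    fix j :: nat assume j: "j \<in> {1..2}"
    have "j = i \<or> j = 3 - i" using j x(2) by auto
    then show "\<exists>z. E u z \<and> c2 z = Some j"
      using simple_graph_sym[OF sg u] t x by (auto simp: c2_def)
  qed (rule uV)
  then show "B_wins_B V E 2 c1" by (rule BB_move[OF lm BA_done])
qed

lemma all_nat_Suc_conv: "(\<forall>i::nat. P i) \<longleftrightarrow> P 0 \<and> (\<forall>i. P (Suc i))"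
  by (metis not0_implies_Suc)

lemma ex_nat_Suc_conv: "(\<exists>i::nat. P i) \<longleftrightarrow> P 0 \<or> (\<exists>i. P (Suc i))"
  by (metis not0_implies_Suc)

lemma gpath_single [simp]: "gpath V E [x] \<longleftrightarrow> x \<in> V"
  by (simp add: gpath_def)

lemma gpath_Cons2 [simp]:
  "gpath V E (x # y # xs) \<longleftrightarrow> x \<in> V \<and> x \<notin> set (y # xs) \<and> E x y \<and> gpath V E (y # xs)"
  unfolding gpath_def by (subst all_nat_Suc_conv) auto

lemma path_edges_single [simp]: "path_edges [x] = {}"
  by (simp add: path_edges_def)

lemma path_edges_Cons2 [simp]: "path_edges (x # y # xs) = insert {x, y} (path_edges (y # xs))"
  unfolding path_edges_def by (rule set_eqI, simp only: mem_Collect_eq insert_iff, subst ex_nat_Suc_conv) simp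

lemma path_edges_subset: "e \<in> path_edges P \<Longrightarrow> e \<subseteq> set P"
  by (auto simp: path_edges_def)

section \<open>Threats and trap paths (three colours)\<close>

text \<open>The zone of a vertex a with a chosen neighbour b: a, b and all neighbours of b.
  If a zone is uncoloured, B can later colour b with any colour.\<close>
definition zone :: "('a \<Rightarrow> 'a \<Rightarrow> bool) \<Rightarrow> 'a \<Rightarrow> 'a \<Rightarrow> 'a set" where
  "zone E a b = insert a (insert b {z. E b z})"

lemma third_colour:
  obtains \<gamma> :: nat where "\<gamma> \<in> {1..3}" "\<gamma> \<noteq> \<alpha>" "\<gamma> \<noteq> \<beta>"
  by (intro that[of "if \<alpha> \<noteq> 1 \<and> \<beta> \<noteq> 1 then 1 else if \<alpha> \<noteq> 2 \<and> \<beta> \<noteq> 2 then 2 else 3"]) auto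

text \<open>A threat: an uncoloured vertex u sees two distinct colours and has an uncoloured neighbour t
  whose neighbours are all uncoloured.  B, to move, colours t with the third colour and blocks u.\<close>
lemma execute_threat:
  assumes sg: "simple_graph V E"
    and u: "c u = None" "E u a" "c a = Some \<alpha>" "E u b" "c b = Some \<beta>"
    and colours: "\<alpha> \<in> {1..3}" "\<beta> \<in> {1..3}" "\<alpha> \<noteq> \<beta>"
    and t: "E u t" "c t = None" "\<forall>z. E t z \<longrightarrow> c z = None"
  shows "B_wins_B V E 3 c"
proof -
  define \<delta> where "\<delta> = 6 - \<alpha> - \<beta>"
  have \<delta>: "\<delta> \<in> {1..3}" "\<delta> \<noteq> \<alpha>" "\<delta> \<noteq> \<beta>" using colours unfolding \<delta>_def atLeastAtMost_iff by arith+
  have V: "u \<in> V" "t \<in> V" using simple_graph_vertices[OF sg t(1)] by auto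
  have ut: "u \<noteq> t" using t(1) simple_graph_irrefl[OF sg] by auto
  let ?c = "c(t := Some \<delta>)"
  have lm: "legal_move V E 3 c ?c" unfolding legal_move_def
    using \<delta> V t by (intro exI[of _ t] exI[of _ \<delta>]) auto
  have "blocked V E 3 ?c" unfolding blocked_def
  proof (intro bexI[of _ u] conjI ballI)
    show "?c u = None" using u ut by auto
    fix i :: nat assume "i \<in> {1..3}"
    then have "i = \<alpha> \<or> i = \<beta> \<or> i = \<delta>" using \<delta> colours by auto
    then show "\<exists>z. E u z \<and> ?c z = Some i" using u t by (metis fun_upd_apply option.distinct(1))
  qed (rule V(1))
  then show ?thesis by (rule BB_move[OF lm BA_done])
qed

definition trap_path ::
  "('a \<Rightarrow> 'a \<Rightarrow> bool) \<Rightarrow> ('a \<Rightarrow> nat option) \<Rightarrow> 'a list \<Rightarrow> (nat \<Rightarrow> 'a) \<Rightarrow> nat \<Rightarrow> nat \<Rightarrow> nat \<Rightarrow> bool"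
where
  "trap_path E c P f \<alpha> \<beta> k \<longleftrightarrow>
     length P = 2*k+1 \<and> 1 \<le> k \<and> (\<forall>i. Suc i < length P \<longrightarrow> E (P!i) (P!Suc i))
     \<and> c (P!0) = Some \<alpha> \<and> c (P!(2*k)) = Some \<beta> \<and> \<alpha> \<in> {1..3} \<and> \<beta> \<in> {1..3}
     \<and> (\<forall>i. 0 < i \<and> i < 2*k \<longrightarrow> E (P!i) (f i) \<and> (\<forall>t\<in>zone E (P!i) (f i). c t = None)
            \<and> (\<forall>u. E (P!i) u \<longrightarrow> u = P!(i-1) \<or> u = P!Suc i \<or> u = f i))
     \<and> (\<forall>i j. 0 < i \<and> i < 2*k \<and> 0 < j \<and> j < 2*k \<and> i \<noteq> j
            \<longrightarrow> zone E (P!i) (f i) \<inter> zone E (P!j) (f j) = {})"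

lemma zone_members: "a \<in> zone E a b" "b \<in> zone E a b" "E b z \<Longrightarrow> z \<in> zone E a b"
  by (auto simp: zone_def)

text \<open>If the first zone is uncoloured and the neighbours P!0, P!2 of P!1 carry distinct colours,
  B (to move) wins by the threat at P!1.\<close>
lemma trap_path_threat:
  assumes sg: "simple_graph V E" and tp: "trap_path E c P f \<alpha> \<beta> k"
    and d: "d (P!0) = Some \<alpha>" "d (P!2) = Some \<gamma>" "\<gamma> \<in> {1..3}" "\<alpha> \<noteq> \<gamma>"
    and free: "\<forall>t\<in>zone E (P!1) (f 1). d t = None"
  shows "B_wins_B V E 3 d"
proof -
  have len: "length P = 2*k+1" "1 \<le> k" and ed: "\<And>i. Suc i < length P \<Longrightarrow> E (P!i) (P!Suc i)"
    and \<alpha>: "\<alpha> \<in> {1..3}" and int1: "E (P!1) (f 1)"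
    using tp unfolding trap_path_def by auto
  show ?thesis
  proof (rule execute_threat[OF sg, of d "P!1" "P!0" \<alpha> "P!2" \<gamma> "f 1"])
  show "E (P!1) (P!0)" using ed[of 0] len simple_graph_sym[OF sg] by auto
  show "E (P!1) (P!2)" using ed[of 1] len by (auto simp: numeral_2_eq_2)
  show "E (P!1) (f 1)" by (rule int1)
  show "d (P!1) = None" "d (f 1) = None" "\<forall>z. E (f 1) z \<longrightarrow> d z = None"
    using free by (auto simp: zone_def)
  qed (use d \<alpha> in auto)
qed

text \<open>B's opening on a long trap path: colouring P!2 is legal, as all its neighbours lie in
  uncoloured zones.\<close>
lemma trap_path_second_move:
  assumes sg: "simple_graph V E" and tp: "trap_path E c P f \<alpha> \<beta> k" and k: "2 \<le> k"
    and \<gamma>: "\<gamma> \<in> {1..3}"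
  shows "legal_move V E 3 c (c(P!2 := Some \<gamma>))"
proof -
  have len: "length P = 2*k+1"
    and int: "\<And>i. 0 < i \<Longrightarrow> i < 2*k \<Longrightarrow> E (P!i) (f i) \<and> (\<forall>t\<in>zone E (P!i) (f i). c t = None)
         \<and> (\<forall>u. E (P!i) u \<longrightarrow> u = P!(i-1) \<or> u = P!Suc i \<or> u = f i)"
    and ed: "\<And>i. Suc i < length P \<Longrightarrow> E (P!i) (P!Suc i)"
    using tp unfolding trap_path_def by blast+
  have free: "\<And>i t. 0 < i \<Longrightarrow> i < 2*k \<Longrightarrow> t \<in> zone E (P!i) (f i) \<Longrightarrow> c t = None"
    using int by blast
  have nbrs: "E (P!2) u \<Longrightarrow> u = P!1 \<or> u = P!3 \<or> u = f 2" for u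
    using int[of 2] k by (auto simp: numeral_3_eq_3)
  have "c (P!1) = None" "c (P!2) = None" "c (P!3) = None" "c (f 2) = None"
    using free[of 1 "P!1"] free[of 2 "P!2"] free[of 3 "P!3"] free[of 2 "f 2"] k
    by (auto simp: zone_members)
  moreover have "P!2 \<in> V" using ed[of 2] len k simple_graph_vertices[OF sg] by auto
  ultimately show ?thesis unfolding legal_move_def using \<gamma> nbrs by fastforce
qed

text \<open>If A answers B's colouring of P!2 inside the first zone, the path from P!2 on is again a
  trap path, one step shorter.\<close>
lemma trap_path_shift:
  assumes tp: "trap_path E c P f \<alpha> \<beta> k" and k: "2 \<le> k" and \<gamma>: "\<gamma> \<in> {1..3}"
    and y: "y \<in> zone E (P!1) (f 1)" "(c(P!2 := Some \<gamma>)) y = None"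
  shows "trap_path E (c(P!2 := Some \<gamma>, y := Some j)) (drop 2 P) (\<lambda>i. f (i+2)) \<gamma> \<beta> (k-1)"
proof -
  define Z where "Z i = zone E (P!i) (f i)" for i
  have len: "length P = 2*k+1" and cn: "c (P!(2*k)) = Some \<beta>" and \<beta>: "\<beta> \<in> {1..3}"
    and ed: "\<And>i. Suc i < length P \<Longrightarrow> E (P!i) (P!Suc i)"
    and int: "\<And>i. 0 < i \<Longrightarrow> i < 2*k \<Longrightarrow> E (P!i) (f i) \<and> (\<forall>t\<in>Z i. c t = None)
         \<and> (\<forall>u. E (P!i) u \<longrightarrow> u = P!(i-1) \<or> u = P!Suc i \<or> u = f i)"
    and dis: "\<And>i j. 0 < i \<Longrightarrow> i < 2*k \<Longrightarrow> 0 < j \<Longrightarrow> j < 2*k \<Longrightarrow> i \<noteq> j \<Longrightarrow> Z i \<inter> Z j = {}"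
    using tp unfolding trap_path_def Z_def by blast+
  have P2: "P!2 \<in> Z 2" "c (P!2) = None" using int[of 2] k by (auto simp: Z_def zone_members)
  have y2: "y \<noteq> P!2" "y \<noteq> P!(2*k)" "P!2 \<noteq> P!(2*k)" using y(2) cn P2 by (auto split: if_splits)
  have nth: "\<And>i. drop 2 P ! i = P!(i+2)" using len k by (simp add: add.commute)
  have y_other: "y \<notin> Z i" if "1 < i" "i < 2*k" for i
    using dis[of 1 i] that y(1) by (auto simp: Z_def)
  show ?thesis
    unfolding trap_path_def nth
  proof (intro conjI allI impI)
    show "length (drop 2 P) = 2*(k-1)+1" "1 \<le> k-1" using len k by auto
    show "E (P!(i+2)) (P!(Suc i+2))" if "Suc i < length (drop 2 P)" for i
      using ed[of "i+2"] that len by auto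
    have "2*(k-1)+2 = 2*k" using k by simp
    then show "(c(P!2 := Some \<gamma>, y := Some j)) (P!(2*(k-1)+2)) = Some \<beta>"
      using y2 cn by simp
    show "(c(P!2 := Some \<gamma>, y := Some j)) (P!(0+2)) = Some \<gamma>" using y2 by (simp add: numeral_2_eq_2)
    show "\<gamma> \<in> {1..3}" "\<beta> \<in> {1..3}" using \<gamma> \<beta> by auto
  next
    fix i assume i: "0 < i \<and> i < 2*(k-1)"
    then have i2: "0 < i+2" "i+2 < 2*k" "1 < i+2" by auto
    have shift: "i+2-1 = (i-1)+2" "Suc (i+2) = Suc i + 2" using i by auto
    show "E (P!(i+2)) (f (i+2))" using int[OF i2(1,2)] by blast
    show "u = P!(i-1+2) \<or> u = P!(Suc i+2) \<or> u = f (i+2)" if "E (P!(i+2)) u" for u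
      using int[OF i2(1,2)] that unfolding shift by simp
    have "Z (i+2) \<inter> Z 2 = {}" using dis[of "i+2" 2] i i2 k by auto
    then show "\<forall>t\<in>zone E (P!(i+2)) (f (i+2)). (c(P!2 := Some \<gamma>, y := Some j)) t = None"
      using int[OF i2(1,2)] y_other[OF i2(3,2)] P2 by (auto simp: Z_def)
  next
    fix i j assume "0 < i \<and> i < 2*(k-1) \<and> 0 < j \<and> j < 2*(k-1) \<and> i \<noteq> j"
    then have "Z (i+2) \<inter> Z (j+2) = {}" by (intro dis) auto
    then show "zone E (P!(i+2)) (f (i+2)) \<inter> zone E (P!(j+2)) (f (j+2)) = {}" by (simp add: Z_def)
  qed
qed

lemma trap_path_wins:
  assumes sg: "simple_graph V E"
  shows "trap_path E c P f \<alpha> \<beta> k \<Longrightarrow> 2 \<le> k \<or> \<alpha> \<noteq> \<beta> \<Longrightarrow> B_wins_B V E 3 c"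
proof (induction k arbitrary: c P f \<alpha> rule: less_induct)
  case (less k)
  define Z where "Z i = zone E (P!i) (f i)" for i
  have len: "length P = 2*k+1" "1 \<le> k" and c0: "c (P!0) = Some \<alpha>" and cn: "c (P!(2*k)) = Some \<beta>"
    and \<alpha>\<beta>: "\<alpha> \<in> {1..3}" "\<beta> \<in> {1..3}"
    and ed: "\<And>i. Suc i < length P \<Longrightarrow> E (P!i) (P!Suc i)"
    and free: "\<And>i t. 0 < i \<Longrightarrow> i < 2*k \<Longrightarrow> t \<in> Z i \<Longrightarrow> c t = None"
    and dis: "\<And>i j. 0 < i \<Longrightarrow> i < 2*k \<Longrightarrow> 0 < j \<Longrightarrow> j < 2*k \<Longrightarrow> i \<noteq> j \<Longrightarrow> Z i \<inter> Z j = {}"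
    using less.prems(1) unfolding trap_path_def Z_def by blast+
  have free1: "\<forall>t\<in>zone E (P!1) (f 1). c t = None" using free[of 1] len by (auto simp: Z_def)
  show ?case
  proof (cases "k = 1")
    case True
    then show ?thesis
      using trap_path_threat[OF sg less.prems(1), of c \<beta>] c0 cn \<alpha>\<beta>(2) less.prems(2) free1 by auto
  next
    case False
    then have k: "2 \<le> k" using len by auto
    obtain \<gamma> where \<gamma>: "\<gamma> \<in> {1..3}" "\<gamma> \<noteq> \<alpha>" "\<gamma> \<noteq> \<beta>" by (rule third_colour)
    define c1 where "c1 = c(P!2 := Some \<gamma>)"
    have dis12: "Z 1 \<inter> Z 2 = {}" using dis[of 1 2] k by auto
    have P2: "P!2 \<in> Z 2" "P!2 \<notin> Z 1" "c (P!2) = None"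
      using dis12 free[of 2 "P!2"] k by (auto simp: Z_def zone_members)
    have P1: "P!1 \<in> Z 1" "P!1 \<in> V"
      using ed[of 1] len simple_graph_vertices[OF sg] by (auto simp: Z_def zone_members)
    have P02: "P!0 \<noteq> P!2" using c0 P2(3) by auto
    have "B_wins_A V E 3 c1"
    proof (rule BA_move)
      have "P!1 \<noteq> P!2" using P1(1) P2(2) by auto
      then show "\<not> all_colored V c1" using P1 free1 unfolding all_colored_def c1_def Z_def by auto
      fix c2 assume "legal_move V E 3 c1 c2"
      then obtain y j where y: "c1 y = None" "c2 = c1(y := Some j)"
        unfolding legal_move_def by blast
      show "B_wins_B V E 3 c2"
      proof (cases "y \<in> zone E (P!1) (f 1)")
        case False
        show ?thesis
          by (rule trap_path_threat[OF sg less.prems(1), of c2 \<gamma>])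
            (use y c0 P02 P2 \<gamma> False free1 in \<open>auto simp: c1_def Z_def\<close>)
      next
        case True
        have "trap_path E c2 (drop 2 P) (\<lambda>i. f (i+2)) \<gamma> \<beta> (k-1)"
          using trap_path_shift[OF less.prems(1) k \<gamma>(1) True] y by (simp add: c1_def)
        then show ?thesis using less.IH[of "k-1"] k \<gamma> by auto
      qed
    qed
    then show ?thesis using BB_move trap_path_second_move[OF sg less.prems(1) k \<gamma>(1)] c1_def by blast
  qed
qed

section \<open>Geometry of a good theta subgraph in a cubic graph\<close>

locale cubic_theta =
  fixes V :: "'a set" and E :: "'a \<Rightarrow> 'a \<Rightarrow> bool" and v w :: 'a and P1 P2 P3 :: "'a list"
  assumes sg: "simple_graph V E" and cub: "cubic V E" and theta: "good_theta V E v w P1 P2 P3"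
begin

definition VH :: "'a set" where "VH = set P1 \<union> set P2 \<union> set P3"

definition EH :: "'a set set" where "EH = path_edges P1 \<union> path_edges P2 \<union> path_edges P3"

lemma sym: "E a b \<Longrightarrow> E b a" using simple_graph_sym[OF sg] .
lemma irrefl: "\<not> E a a" using simple_graph_irrefl[OF sg] .
lemma in_V: "E a b \<Longrightarrow> a \<in> V" "E a b \<Longrightarrow> b \<in> V" using simple_graph_vertices[OF sg] by auto

lemma ends_distinct: "v \<noteq> w"
  using theta by (simp add: good_theta_def Let_def)

lemma theta_path:
  "P \<in> {P1,P2,P3} \<Longrightarrow> gpath V E P \<and> hd P = v \<and> last P = w \<and> even (length P - 1) \<and> long_path E P"
  using theta by (auto simp: good_theta_def Let_def)

lemma theta_paths_meet: "set P1 \<inter> set P2 = {v,w}" "set P1 \<inter> set P3 = {v,w}" "set P2 \<inter> set P3 = {v,w}"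
  using theta by (auto simp: good_theta_def Let_def)

lemma no_short_detour:
  "gpath V E Q \<Longrightarrow> hd Q \<in> VH \<Longrightarrow> last Q \<in> VH \<Longrightarrow> hd Q \<noteq> last Q \<Longrightarrow> path_edges Q \<inter> EH = {}
   \<Longrightarrow> \<not> short_path E Q"
  using theta unfolding good_theta_def Let_def VH_def EH_def by blast

lemma outside_path_long:
  assumes "gpath V E Q" "hd Q \<in> VH" "last Q \<in> VH" "hd Q \<noteq> last Q"
    and outside: "\<forall>e\<in>path_edges Q. \<not> e \<subseteq> VH"
    and z: "z \<in> set Q" "close E (hd Q) z" "close E (last Q) z"
  shows False
proof -
  have "e \<subseteq> VH" if "e \<in> EH" for e
    using that path_edges_subset unfolding EH_def VH_def by blast
  then have "path_edges Q \<inter> EH = {}" using outside by blast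
  moreover have "short_path E Q" using z unfolding short_path_def by blast
  ultimately show False using no_short_detour assms(1-4) by blast
qed

lemma outside_single_attachment:
  assumes "a \<in> VH" "E a p" "p \<notin> VH" "E p z" "z \<in> VH"
  shows "z = a"
proof (rule ccontr)
  assume az: "z \<noteq> a"
  show False
  proof (rule outside_path_long[of "[a, p, z]" p])
    show "gpath V E [a, p, z]" using assms az in_V irrefl by auto
    show "close E (last [a, p, z]) p" using assms sym by (simp add: close_def)
  qed (use assms az in \<open>auto simp: close_def\<close>)
qed

text \<open>Zones of distinct vertices of H, taken with respect to neighbours outside H, are
  disjoint; otherwise a short path outside H would join the two vertices.\<close>
lemma zones_disjoint:
  assumes a: "a \<in> VH" "E a oa" "oa \<notin> VH" and b: "b \<in> VH" "E b ob" "ob \<notin> VH" and "a \<noteq> b"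
  shows "zone E a oa \<inter> zone E b ob = {}"
proof (rule ccontr)
  assume "zone E a oa \<inter> zone E b ob \<noteq> {}"
  then obtain t where ta: "t \<in> zone E a oa" and tb: "t \<in> zone E b ob" by blast
  have "t \<notin> VH"
    using ta tb outside_single_attachment[OF a] outside_single_attachment[OF b] a b \<open>a \<noteq> b\<close>
    by (auto simp: zone_def)
  then have t: "t = oa \<or> E oa t" "t = ob \<or> E ob t" using ta tb a b by (auto simp: zone_def)
  have same: False if "oa = ob"
  proof (rule outside_path_long[of "[a, oa, b]" oa])
    show "gpath V E [a, oa, b]" using a b \<open>a \<noteq> b\<close> that in_V irrefl sym by auto
    show "close E (last [a, oa, b]) oa" using b that by (simp add: close_def)
  qed (use a b \<open>a \<noteq> b\<close> in \<open>auto simp: close_def\<close>)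
  have adjacent: False if "E oa ob"
  proof (rule outside_path_long[of "[a, oa, ob, b]" oa])
    show "gpath V E [a, oa, ob, b]" using a b \<open>a \<noteq> b\<close> that in_V irrefl sym by auto
    show "close E (last [a, oa, ob, b]) oa" using b that sym by (auto simp: close_def)
  qed (use a b \<open>a \<noteq> b\<close> in \<open>auto simp: close_def\<close>)
  have common: False if "E oa t" "E ob t" "oa \<noteq> ob"
  proof (rule outside_path_long[of "[a, oa, t, ob, b]" t])
    show "gpath V E [a, oa, t, ob, b]" using a b \<open>a \<noteq> b\<close> that \<open>t \<notin> VH\<close> in_V irrefl sym by auto
    show "close E (hd [a, oa, t, ob, b]) t" "close E (last [a, oa, t, ob, b]) t"
      using a b that sym by (auto simp: close_def)
  qed (use a b \<open>a \<noteq> b\<close> in auto)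
  show False using t same adjacent common sym by metis
qed

lemma theta_path_nth:
  assumes "P \<in> {P1,P2,P3}"
  shows "distinct P" "set P \<subseteq> V" "\<And>i. Suc i < length P \<Longrightarrow> E (P!i) (P!Suc i)"
    "P!0 = v" "P!(length P - 1) = w"
  using theta_path[OF assms] by (auto simp: gpath_def hd_conv_nth last_conv_nth)

lemma theta_path_VH: "P \<in> {P1,P2,P3} \<Longrightarrow> set P \<subseteq> VH"
  by (auto simp: VH_def)

lemma ends_on_P1: "v \<in> set P1" "w \<in> set P1"
proof -
  have "P1 \<noteq> []" "hd P1 = v" "last P1 = w" using theta_path[of P1] by (auto simp: gpath_def)
  then show "v \<in> set P1" "w \<in> set P1" by (metis hd_in_set, metis last_in_set)
qed

lemma ends_VH: "v \<in> VH" "w \<in> VH"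
  using ends_on_P1 by (auto simp: VH_def)

lemma interior_not_end:
  assumes P: "P \<in> {P1,P2,P3}" and i: "0 < i" "i < length P - 1"
  shows "P!i \<noteq> v" "P!i \<noteq> w"
proof -
  have "i < length P" "0 < length P" "length P - 1 < length P" using i by auto
  then have "P!i \<noteq> P!0" "P!i \<noteq> P!(length P - 1)"
    using i theta_path_nth(1)[OF P] by (simp_all add: nth_eq_iff_index_eq)
  then show "P!i \<noteq> v" "P!i \<noteq> w" using theta_path_nth(4,5)[OF P] by auto
qed

lemma interior_path_unique:
  assumes "P \<in> {P1,P2,P3}" "P' \<in> {P1,P2,P3}" "a \<in> set P" "a \<in> set P'" "a \<noteq> v" "a \<noteq> w"
  shows "P = P'"
  using assms theta_paths_meet by (auto simp: Int_commute)

text \<open>By (4), each path has at least four edges: two edges would make it short.\<close>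
lemma theta_path_length:
  assumes P: "P \<in> {P1,P2,P3}"
  shows "4 \<le> length P - 1"
proof -
  have ev: "even (length P - 1)" and long: "long_path E P" using theta_path[OF P] by auto
  have "length P - 1 \<noteq> 0"
  proof
    assume "length P - 1 = 0"
    then show False using theta_path_nth(4,5)[OF P] ends_distinct by simp
  qed
  moreover have "length P - 1 \<noteq> 2"
  proof
    assume l: "length P - 1 = 2"
    then have l3: "length P = 3" by auto
    have e: "E (P!0) (P!1)" "E (P!1) (P!2)"
      using theta_path_nth(3)[OF P, of 0] theta_path_nth(3)[OF P, of 1] l3 by (auto simp: numeral_2_eq_2)
    have "P \<noteq> []" using l3 by auto
    then have "hd P = P!0" "last P = P!2" using l3 by (simp_all add: hd_conv_nth last_conv_nth)
    then have "close E (hd P) (P!1) \<and> close E (last P) (P!1)" using e sym by (auto simp: close_def)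
    moreover have "P!1 \<in> set P" using l3 by auto
    ultimately have "short_path E P" unfolding short_path_def by blast
    then show False using long by (simp add: long_path_def)
  qed
  ultimately show ?thesis using ev by presburger
qed

text \<open>By (3) an edge between two vertices of H is an edge of H, so the only H-neighbours of an
  interior vertex are its two path neighbours.\<close>
lemma interior_H_neighbours:
  assumes P: "P \<in> {P1,P2,P3}" and i: "0 < i" "i < length P - 1" and u: "E (P!i) u" "u \<in> VH"
  shows "u = P!(i-1) \<or> u = P!Suc i"
proof -
  have a: "P!i \<in> VH" using theta_path_VH[OF P] i by auto
  have "{P!i, u} \<in> EH"
  proof (rule ccontr)
    assume "{P!i, u} \<notin> EH"
    then have "path_edges [P!i, u] \<inter> EH = {}" by simp
    moreover have "short_path E [P!i, u]" unfolding short_path_def close_def using u by auto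
    moreover have "gpath V E [P!i, u]" using u in_V irrefl by auto
    ultimately show False using no_short_detour[of "[P!i, u]"] a u irrefl by auto
  qed
  then obtain P' m where P': "P' \<in> {P1,P2,P3}" and m: "Suc m < length P'" "{P!i, u} = {P'!m, P'!Suc m}"
    unfolding EH_def path_edges_def by blast
  have "P!i \<in> {P'!m, P'!Suc m}" using m(2) by (metis insertI1)
  then have "P!i \<in> set P'" using m(1) by auto
  then have PP: "P' = P"
    using interior_path_unique[OF P' P] interior_not_end[OF P i] i by auto
  have d: "distinct P" using theta_path_nth(1)[OF P] .
  have il: "i < length P" using i by auto
  from m PP have "(P!i = P!m \<and> u = P!Suc m) \<or> (P!i = P!Suc m \<and> u = P!m)"
    by (auto simp: doubleton_eq_iff)
  then have "(i = m \<and> u = P!Suc m) \<or> (i = Suc m \<and> u = P!m)"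
    using d il m PP by (auto simp: nth_eq_iff_index_eq)
  then show ?thesis by auto
qed

text \<open>Hence, the graph being cubic, each interior vertex has exactly one neighbour outside H,
  its pendant.\<close>
definition pendant :: "'a \<Rightarrow> 'a" where "pendant a = (SOME u. E a u \<and> u \<notin> VH)"

lemma pendant_props:
  assumes P: "P \<in> {P1,P2,P3}" and i: "0 < i" "i < length P - 1"
  shows "E (P!i) (pendant (P!i))" "pendant (P!i) \<notin> VH"
    "\<And>u. E (P!i) u \<Longrightarrow> u = P!(i-1) \<or> u = P!Suc i \<or> u = pendant (P!i)"
proof -
  let ?a = "P!i" and ?N = "{u. E (P!i) u}"
  have aV: "?a \<in> V" using theta_path_nth(2)[OF P] i by auto
  have cN: "card ?N = 3" using cub aV by (simp add: cubic_def)
  then have fN: "finite ?N" by (metis card.infinite zero_neq_numeral)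
  have idx: "Suc (i-1) = i" "i-1 < length P" "Suc i < length P" "i - 1 \<noteq> Suc i" using i by auto
  have nbrs: "P!(i-1) \<in> ?N" "P!Suc i \<in> ?N" "P!(i-1) \<in> VH" "P!Suc i \<in> VH" "P!(i-1) \<noteq> P!Suc i"
    using theta_path_nth(3)[OF P, of "i-1"] theta_path_nth(3)[OF P, of i] idx sym
      theta_path_VH[OF P] nth_mem[OF idx(2)] nth_mem[OF idx(3)]
      nth_eq_iff_index_eq[OF theta_path_nth(1)[OF P] idx(2,3)]
    by auto
  have "card {P!(i-1), P!Suc i} < 3" by (simp add: card_insert_if)
  then have "\<exists>u. E ?a u \<and> u \<notin> {P!(i-1), P!Suc i}"
    using cubic_neighbour_outside[OF cub aV, of "{P!(i-1), P!Suc i}"] by simp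
  then have "\<exists>u. E ?a u \<and> u \<notin> VH" using interior_H_neighbours[OF P i] by blast
  then show pend: "E ?a (pendant ?a)" "pendant ?a \<notin> VH" unfolding pendant_def by (metis (mono_tags, lifting) someI_ex)+
  fix u assume u: "E ?a u"
  show "u = P!(i-1) \<or> u = P!Suc i \<or> u = pendant ?a"
  proof (rule ccontr)
    assume nu: "\<not> ?thesis"
    then have "u \<notin> VH" using interior_H_neighbours[OF P i u] by auto
    moreover have "P!(i-1) \<noteq> pendant ?a" "P!Suc i \<noteq> pendant ?a" using nbrs pend by auto
    ultimately have "card {P!(i-1), P!Suc i, pendant ?a, u} = 4" using nbrs(3-5) nu by (auto simp: card_insert_if)
    moreover have "{P!(i-1), P!Suc i, pendant ?a, u} \<subseteq> ?N" using nbrs pend u by auto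
    ultimately have "4 \<le> card ?N" by (metis card_mono fN)
    then show False using cN by simp
  qed
qed

definition pzone :: "'a \<Rightarrow> 'a set" where "pzone a = zone E a (pendant a)"

lemma interior_VH:
  "P \<in> {P1,P2,P3} \<Longrightarrow> 0 < i \<Longrightarrow> i < length P - 1 \<Longrightarrow> P!i \<in> VH"
  using theta_path_VH[of P] nth_mem[of i P] by auto

lemma pzones_disjoint:
  assumes P: "P \<in> {P1,P2,P3}" "0 < i" "i < length P - 1"
    and P': "P' \<in> {P1,P2,P3}" "0 < j" "j < length P' - 1" and "P!i \<noteq> P'!j"
  shows "pzone (P!i) \<inter> pzone (P'!j) = {}"
  unfolding pzone_def
  using zones_disjoint interior_VH[OF P] interior_VH[OF P'] pendant_props(1,2)[OF P] pendant_props(1,2)[OF P']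
    assms(7) by blast

lemma pzone_VH:
  assumes P: "P \<in> {P1,P2,P3}" "0 < i" "i < length P - 1" and t: "t \<in> pzone (P!i)" "t \<in> VH"
  shows "t = P!i"
  using t outside_single_attachment[OF interior_VH[OF P] pendant_props(1,2)[OF P]] pendant_props(2)[OF P]
  by (auto simp: pzone_def zone_def)

lemma pzone_close:
  assumes P: "P \<in> {P1,P2,P3}" "0 < i" "i < length P - 1" and t: "t \<in> pzone (P!i)"
  shows "close E t (P!i)"
  using t pendant_props(1)[OF P] sym unfolding pzone_def zone_def close_def by blast

lemma theta_path_trap:
  assumes P: "P \<in> {P1,P2,P3}" and ends: "c v = Some \<alpha>" "c w = Some \<beta>" "\<alpha> \<in> {1..3}" "\<beta> \<in> {1..3}"
    and free: "\<And>i t. 0 < i \<Longrightarrow> i < length P - 1 \<Longrightarrow> t \<in> pzone (P!i) \<Longrightarrow> c t = None"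
  shows "B_wins_B V E 3 c"
proof -
  define k where "k = (length P - 1) div 2"
  have l4: "4 \<le> length P - 1" "even (length P - 1)" using theta_path_length[OF P] theta_path[OF P] by auto
  then have lk: "2*k = length P - 1" unfolding k_def by simp
  then have len: "length P = 2*k+1" and k: "2 \<le> k" using l4(1) by linarith+
  have "trap_path E c P (\<lambda>i. pendant (P!i)) \<alpha> \<beta> k"
    unfolding trap_path_def
  proof (intro conjI allI impI)
    show "length P = 2*k+1" "1 \<le> k" using len k by auto
    show "E (P!i) (P!Suc i)" if "Suc i < length P" for i using theta_path_nth(3)[OF P that] .
    show "c (P!0) = Some \<alpha>" using theta_path_nth(4)[OF P] ends(1) by simp
    show "c (P!(2*k)) = Some \<beta>" using theta_path_nth(5)[OF P] ends(2) lk by simp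
    show "\<alpha> \<in> {1..3}" "\<beta> \<in> {1..3}" using ends by auto
  next
    fix i assume "0 < i \<and> i < 2*k"
    then have i: "0 < i" "i < length P - 1" using lk by auto
    show "E (P!i) (pendant (P!i))" by (rule pendant_props(1)[OF P i])
    show "\<forall>t\<in>zone E (P!i) (pendant (P!i)). c t = None" using free[OF i] by (auto simp: pzone_def)
    show "u = P!(i-1) \<or> u = P!Suc i \<or> u = pendant (P!i)" if "E (P!i) u" for u
      using pendant_props(3)[OF P i that] .
  next
    fix i j assume ij: "0 < i \<and> i < 2*k \<and> 0 < j \<and> j < 2*k \<and> i \<noteq> j"
    then have "i < length P" "j < length P" using lk by auto
    then have "P!i \<noteq> P!j" using theta_path_nth(1)[OF P] ij by (simp add: nth_eq_iff_index_eq)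
    then have "pzone (P!i) \<inter> pzone (P!j) = {}" using pzones_disjoint[OF P _ _ P] ij lk by simp
    then show "zone E (P!i) (pendant (P!i)) \<inter> zone E (P!j) (pendant (P!j)) = {}"
      by (simp add: pzone_def)
  qed
  then show ?thesis using trap_path_wins[OF sg] k by blast
qed

definition in_pzone_of :: "'a list \<Rightarrow> 'a \<Rightarrow> bool" where
  "in_pzone_of P y \<longleftrightarrow> (\<exists>i. 0 < i \<and> i < length P - 1 \<and> y \<in> pzone (P!i))"

lemma in_pzone_of_unique:
  assumes P: "P \<in> {P1,P2,P3}" and P': "P' \<in> {P1,P2,P3}" and meet: "set P \<inter> set P' = {v,w}"
    and y: "in_pzone_of P y" "in_pzone_of P' y"
  shows False
proof -
  obtain i j where i: "0 < i" "i < length P - 1" "y \<in> pzone (P!i)"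
    and j: "0 < j" "j < length P' - 1" "y \<in> pzone (P'!j)" using y unfolding in_pzone_of_def by blast
  have "P!i \<noteq> P'!j"
  proof
    assume eq: "P!i = P'!j"
    have "P!i \<in> set P" "P'!j \<in> set P'" using i(2) j(2) by simp_all
    then have "P!i \<in> set P \<inter> set P'" using eq by simp
    then show False using meet interior_not_end[OF P i(1,2)] by simp
  qed
  then show False using pzones_disjoint[OF P i(1,2) P' j(1,2)] i(3) j(3) by blast
qed

lemma path_avoiding_two:
  obtains P where "P \<in> {P1,P2,P3}" "\<not> in_pzone_of P y1" "\<not> in_pzone_of P y2"
proof -
  have exclusive: "\<not> (in_pzone_of P1 y \<and> in_pzone_of P2 y)" "\<not> (in_pzone_of P1 y \<and> in_pzone_of P3 y)"
    "\<not> (in_pzone_of P2 y \<and> in_pzone_of P3 y)" for y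
    using in_pzone_of_unique[of P1 P2] in_pzone_of_unique[of P1 P3] in_pzone_of_unique[of P2 P3]
      theta_paths_meet by auto
  consider "\<not> in_pzone_of P1 y1 \<and> \<not> in_pzone_of P1 y2" | "\<not> in_pzone_of P2 y1 \<and> \<not> in_pzone_of P2 y2"
    | "\<not> in_pzone_of P3 y1 \<and> \<not> in_pzone_of P3 y2"
    using exclusive by blast
  then show ?thesis using that by (cases, blast+)
qed

text \<open>The endgame: x is far from H, both ends of H are coloured and only x, v, w and two further
  vertices are coloured.  Then B, to move, wins on a path avoiding the two further vertices.\<close>
lemma endgame:
  assumes farx: "\<forall>y\<in>VH. far E x y" and ends: "c v = Some \<alpha>" "c w = Some \<beta>" "\<alpha> \<in> {1..3}" "\<beta> \<in> {1..3}"
    and coloured: "\<And>t. c t \<noteq> None \<Longrightarrow> t \<in> {x, v, w, y1, y2}"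
  shows "B_wins_B V E 3 c"
proof -
  obtain P where P: "P \<in> {P1,P2,P3}" and avoid: "\<not> in_pzone_of P y1" "\<not> in_pzone_of P y2"
    by (rule path_avoiding_two)
  show ?thesis
  proof (rule theta_path_trap[OF P ends])
    fix i t assume i: "0 < i" "i < length P - 1" and t: "t \<in> pzone (P!i)"
    have "t \<noteq> x" using farx pzone_close[OF P i t] interior_VH[OF P i] by (auto simp: far_def)
    moreover have "t \<noteq> v" "t \<noteq> w" using pzone_VH[OF P i t] interior_not_end[OF P i] ends_VH by auto
    moreover have "t \<noteq> y1" "t \<noteq> y2" using avoid i t unfolding in_pzone_of_def by blast+
    ultimately show "c t = None" using coloured by blast
  qed
qed

lemma far_from_H:
  assumes "\<forall>y\<in>VH. far E x y" and "y \<in> VH"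
  shows "x \<noteq> y" "\<not> E x y" "\<not> E y x"
proof -
  have "\<not> close E x y" using assms by (simp add: far_def)
  then show "x \<noteq> y" "\<not> E x y" "\<not> E y x" unfolding close_def using sym by auto
qed

lemma ends_V: "v \<in> V" "w \<in> V"
  using ends_on_P1 theta_path_nth(2)[of P1] by auto

lemma two_interior_vertices:
  "P1!1 \<noteq> P2!1" "P1!1 \<in> V" "P2!1 \<in> V" "P1!1 \<in> VH" "P2!1 \<in> VH"
  "P1!1 \<notin> {v, w}" "P2!1 \<notin> {v, w}"
proof -
  have P: "P1 \<in> {P1,P2,P3}" "P2 \<in> {P1,P2,P3}" by simp_all
  have i: "0 < (1::nat)" "1 < length P1 - 1" "1 < length P2 - 1"
    using theta_path_length[OF P(1)] theta_path_length[OF P(2)] by linarith+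
  show ends: "P1!1 \<notin> {v, w}" "P2!1 \<notin> {v, w}"
    using interior_not_end[OF P(1) i(1,2)] interior_not_end[OF P(2) i(1,3)] by simp_all
  have mem: "P1!1 \<in> set P1" "P2!1 \<in> set P2" using i(2,3) nth_mem[of 1 P1] nth_mem[of 1 P2] by linarith+
  show "P1!1 \<noteq> P2!1"
  proof
    assume "P1!1 = P2!1"
    then have "P1!1 \<in> set P1 \<inter> set P2" using mem by simp
    then show False using theta_paths_meet(1) ends(1) by simp
  qed
  show "P1!1 \<in> V" "P2!1 \<in> V" using mem theta_path_nth(2)[OF P(1)] theta_path_nth(2)[OF P(2)] by blast+
  show "P1!1 \<in> VH" "P2!1 \<in> VH" using mem by (simp_all add: VH_def)
qed

text \<open>B's second move: after A has coloured y1 (not w), B colours w with a colour different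
  from those of v and y1; after A's next move the endgame applies.\<close>
lemma colour_w_then_endgame:
  assumes farx: "\<forall>y\<in>VH. far E x y" and cv: "c v = Some \<alpha>" "\<alpha> \<in> {1..3}"
    and cw: "c w = None" and cy: "c y1 = Some j"
    and coloured: "\<And>t. c t \<noteq> None \<Longrightarrow> t \<in> {x, v, y1}"
  shows "B_wins_B V E 3 c"
proof -
  obtain \<kappa> where \<kappa>: "\<kappa> \<in> {1..3}" "\<kappa> \<noteq> \<alpha>" "\<kappa> \<noteq> j" by (rule third_colour)
  define c' where "c' = c(w := Some \<kappa>)"
  have "c u \<noteq> Some \<kappa>" if "E w u" for u
    using coloured[of u] far_from_H[OF farx ends_VH(2)] that cv cy \<kappa> by auto
  then have lm: "legal_move V E 3 c c'"
    unfolding legal_move_def c'_def using ends_V cw \<kappa> by blast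
  have "B_wins_A V E 3 c'"
  proof (rule BA_move)
    have "c' t = None" if "t \<in> VH" "t \<notin> {v, w}" "t \<noteq> y1" for t
      using coloured[of t] that far_from_H(1)[OF farx that(1)] unfolding c'_def by fastforce
    then have "c' (P1!1) = None \<or> c' (P2!1) = None" using two_interior_vertices by metis
    then show "\<not> all_colored V c'" using two_interior_vertices(2,3) unfolding all_colored_def by auto
    fix c'' assume "legal_move V E 3 c' c''"
    then obtain y2 l where y2: "c' y2 = None" "c'' = c'(y2 := Some l)"
      unfolding legal_move_def by blast
    show "B_wins_B V E 3 c''"
    proof (rule endgame[OF farx, of c'' \<alpha> \<kappa> y1 y2])
      show "c'' v = Some \<alpha>" "c'' w = Some \<kappa>" using y2 cv ends_distinct by (auto simp: c'_def)
      show "\<alpha> \<in> {1..3}" "\<kappa> \<in> {1..3}" using cv \<kappa> by auto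
      show "t \<in> {x, v, w, y1, y2}" if "c'' t \<noteq> None" for t
        using that coloured[of t] y2 by (auto simp: c'_def split: if_splits)
    qed
  qed
  then show ?thesis by (rule BB_move[OF lm])
qed

lemma B_wins_after_colouring_v:
  assumes farx: "\<forall>y\<in>VH. far E x y" and cv: "c v = Some \<alpha>" "\<alpha> \<in> {1..3}"
    and coloured: "\<And>t. c t \<noteq> None \<Longrightarrow> t \<in> {x, v}"
  shows "B_wins_A V E 3 c"
proof (rule BA_move)
  have cw: "c w = None" using coloured[of w] far_from_H(1)[OF farx ends_VH(2)] ends_distinct by blast
  then show "\<not> all_colored V c" using ends_V by (auto simp: all_colored_def)
  fix c' assume "legal_move V E 3 c c'"
  then obtain y1 j where y1: "c y1 = None" "j \<in> {1..3}" "c' = c(y1 := Some j)"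
    unfolding legal_move_def by blast
  show "B_wins_B V E 3 c'"
  proof (cases "y1 = w")
    case True
    show ?thesis
    proof (rule endgame[OF farx, of c' \<alpha> j y1 y1])
      show "c' v = Some \<alpha>" "c' w = Some j" using y1 cv True by auto
      show "t \<in> {x, v, w, y1, y1}" if "c' t \<noteq> None" for t using that coloured[of t] y1 by auto
    qed (use cv y1 in auto)
  next
    case False
    show ?thesis
    proof (rule colour_w_then_endgame[OF farx, of c' \<alpha> y1 j])
      show "t \<in> {x, v, y1}" if "c' t \<noteq> None" for t using that coloured[of t] y1 by auto
    qed (use cv cw y1 False in auto)
  qed
qed

end

lemma B_wins_three_colours:
  assumes sg: "simple_graph V E" and cub: "cubic V E" and "V \<noteq> {}"
    and theta: "\<forall>x\<in>V. \<exists>v w P1 P2 P3. good_theta V E v w P1 P2 P3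
            \<and> (\<forall>y \<in> set P1 \<union> set P2 \<union> set P3. far E x y)"
  shows "B_wins_A V E 3 (\<lambda>_. None)"
proof (rule BA_move)
  show "\<not> all_colored V (\<lambda>_. None)" using \<open>V \<noteq> {}\<close> by (auto simp: all_colored_def)
  fix c1 assume "legal_move V E 3 (\<lambda>_. None) c1"
  then obtain x i where x: "x \<in> V" "c1 = (\<lambda>_. None)(x := Some i)"
    unfolding legal_move_def by blast
  obtain v w P1 P2 P3 where gt: "good_theta V E v w P1 P2 P3"
    and far: "\<forall>y \<in> set P1 \<union> set P2 \<union> set P3. far E x y" using theta x(1) by blast
  interpret cubic_theta V E v w P1 P2 P3 using sg cub gt by unfold_locales
  have farx: "\<forall>y\<in>VH. far E x y" using far by (simp add: VH_def)
  define c2 where "c2 = c1(v := Some 1)"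
  have "legal_move V E 3 c1 c2" unfolding legal_move_def c2_def
    using ends_V far_from_H[OF farx ends_VH(1)] x by (intro exI[of _ v] exI[of _ 1]) auto
  moreover have "B_wins_A V E 3 c2"
    using far_from_H[OF farx ends_VH(1)] x
    by (intro B_wins_after_colouring_v[OF farx, of c2 1]) (auto simp: c2_def split: if_splits)
  ultimately show "B_wins_B V E 3 c1" by (rule BB_move)
qed

theorem mainTheorem12:
  fixes V :: "'a set" and E :: "'a \<Rightarrow> 'a \<Rightarrow> bool"
  assumes "simple_graph V E" and "cubic V E" and "V \<noteq> {}"
    and "\<forall>x\<in>V. \<exists>v w P1 P2 P3. good_theta V E v w P1 P2 P3
            \<and> (\<forall>y \<in> set P1 \<union> set P2 \<union> set P3. far E x y)"
  shows "B_wins_A V E 3 (\<lambda>_. None) \<and> game_chromatic_number V E = 4"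
proof
  have nbrs: "\<exists>u u'. E x u \<and> E x u' \<and> u \<noteq> u'" if "x \<in> V" for x
    using cubic_two_neighbours[OF assms(2) that] .
  show three: "B_wins_A V E 3 (\<lambda>_. None)" by (rule B_wins_three_colours[OF assms])
  have "A_wins_A V E 4 (\<lambda>_. None)"
    using A_wins_when_degree_small[of V E 4] cubic_degree[OF assms(2)] assms(1)
    by (simp add: simple_graph_def)
  moreover have "B_wins_A V E j (\<lambda>_. None)" if "j < 4" for j
  proof -
    have "j = 0 \<or> j = 1 \<or> j = 2 \<or> j = 3" using that by auto
    then show ?thesis
      using B_wins_no_colours[OF assms(3)] B_wins_one_colour[OF assms(1,3)]
        B_wins_two_colours[OF assms(1,3) nbrs] three nbrs by blast
  qed
  ultimately show "game_chromatic_number V E = 4" by (rule game_chromatic_number_eqI)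
qed

end
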